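(* There exists a constant $C>1$ such that for every $0<r<\tfrac13$, $$\frac1C\,\Lambda(B(S,r'),r')\Big(\frac43\Big)^{k_r}\le \Lambda(B(S,r),r)\le C\,\Lambda(B(S,r'),r')\Big(\frac43\Big)^{k_r},$$ where $k_r$ is the unique positive integer with $\tfrac13\le 3^{k_r}r<1$ and $r':=3^{k_r}r$.
   Context: Identify $\mathbb{R}^2$ with $\mathbb{C}$. $S$ denotes the von Koch curve: the unique nonempty compact set with $S=\bigcup_{i=1}^4 f_i(S)$, where $f_1(z)=z/3$, $f_2(z)=\tfrac13+e^{i\pi/3}z/3$, $f_3(z)=\tfrac12+\tfrac{\sqrt3}{6}i+e^{-i\pi/3}z/3$, $f_4(z)=\tfrac23+z/3$. For $A\subset\mathbb{R}^2$, $B(A,r):=\{x:\mathrm{dist}(x,A)\le r\}$. A rectifiable curve is the image of a Lipschitz map $[0,1]\to\mathbb{R}^2$. $\Lambda(E,r):=\inf\{\mathcal{H}^1(\Gamma):\Gamma \text{ a rectifiable curve with } B(\Gamma,r)\supset E\}$. *)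

theory Defs
  imports "HOL-Analysis.Analysis"
begin

definition koch_f1 :: "complex \<Rightarrow> complex" where
  "koch_f1 z = z / 3"
definition koch_f2 :: "complex \<Rightarrow> complex" where
  "koch_f2 z = 1/3 + cis (pi/3) * z / 3"
definition koch_f3 :: "complex \<Rightarrow> complex" where
  "koch_f3 z = 1/2 + complex_of_real (sqrt 3 / 6) * \<i> + cis (- pi/3) * z / 3"
definition koch_f4 :: "complex \<Rightarrow> complex" where
  "koch_f4 z = 2/3 + z / 3"

definition koch :: "complex set" where
  "koch = (THE K. K \<noteq> {} \<and> compact K \<and>
            K = koch_f1 ` K \<union> koch_f2 ` K \<union> koch_f3 ` K \<union> koch_f4 ` K)"

definition nbhd :: "complex set \<Rightarrow> real \<Rightarrow> complex set" where
  "nbhd A r = {x. infdist x A \<le> r}"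

definition hausdorff1_pre :: "real \<Rightarrow> complex set \<Rightarrow> ennreal" where
  "hausdorff1_pre \<delta> E = (INF U \<in> {U :: nat \<Rightarrow> complex set.
        E \<subseteq> (\<Union>i. U i) \<and> (\<forall>i. bounded (U i) \<and> diameter (U i) \<le> \<delta>)}.
        (\<Sum>i. ennreal (diameter (U i))))"

definition hausdorff1 :: "complex set \<Rightarrow> ennreal" where
  "hausdorff1 E = (SUP \<delta> \<in> {0<..}. hausdorff1_pre \<delta> E)"

definition rect_curve :: "complex set \<Rightarrow> bool" where
  "rect_curve \<Gamma> \<longleftrightarrow> (\<exists>\<gamma> :: real \<Rightarrow> complex. \<exists>L. L-lipschitz_on {0..1} \<gamma> \<and> \<Gamma> = \<gamma> ` {0..1})"

definition Lam :: "complex set \<Rightarrow> real \<Rightarrow> ennreal" where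
  "Lam E r = (INF \<Gamma> \<in> {\<Gamma>. rect_curve \<Gamma> \<and> E \<subseteq> nbhd \<Gamma> r}. hausdorff1 \<Gamma>)"

end

theory Submission
  imports Defs
begin

text \<open>
  For r' := 3^k r in [1/3, 1) both bounds follow from two estimates, each of the form
  Lam(B(S, r), r) ~ (4/3)^k with absolute constants; for k = 0 they bound Lam(B(S, r'), r')
  above and below by constants.

  Upper bound: gluing the four Koch images of a curve through the triangle spanned by S gives
  a curve whose Lipschitz constant grows by the factor 4/3. After k steps, starting from the
  boundary of the triangle, every point of S lies within sqrt 3 / 6 / 3^k of the curve, so its
  r-neighbourhood contains B(S, r), and its length is at most twice its Lipschitz constant.

  Lower bound: the interior of the triangle satisfies the open set condition, so the 4^n images
  of a fixed interior point under the words of length n lie in S and are 1/(10 * 3^n) apart.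
  For n = k - 4, a curve whose r-neighbourhood contains B(S, r) passes within r of each of them,
  and a connected set that passes near many well separated points and is not too small has
  H^1 at least proportional to their number.
\<close>

section \<open>Gluing Lipschitz paths\<close>

definition concat4 :: "(nat \<Rightarrow> real \<Rightarrow> 'a) \<Rightarrow> real \<Rightarrow> 'a" where
  "concat4 g t =
    (if t \<le> 3/4 then (if t \<le> 1/2 then (if t \<le> 1/4 then g 0 (4*t) else g 1 (4*t-1)) else g 2 (4*t-2))
     else g 3 (4*t-3))"

lemma lipschitz_on_rescaled_piece:
  fixes h :: "real \<Rightarrow> 'a::metric_space"
  assumes "L-lipschitz_on {0..1} h"
  shows "(4*L)-lipschitz_on {c/4..(c+1)/4} (\<lambda>t. h (4*t - c))"
proof (rule lipschitz_onI)
  show "0 \<le> 4*L" using lipschitz_on_nonneg[OF assms] by simp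
  fix x y assume "x \<in> {c/4..(c+1)/4}" "y \<in> {c/4..(c+1)/4}"
  then have "dist (h (4*x - c)) (h (4*y - c)) \<le> L * dist (4*x - c) (4*y - c)"
    by (intro lipschitz_onD[OF assms]) auto
  also have "dist (4*x - c) (4*y - c) = 4 * dist x y" by (simp add: dist_real_def abs_if)
  finally show "dist (h (4*x - c)) (h (4*y - c)) \<le> 4*L * dist x y" by simp
qed

lemma lipschitz_on_concat4:
  fixes g :: "nat \<Rightarrow> real \<Rightarrow> 'a::metric_space"
  assumes L: "\<And>m. m < 4 \<Longrightarrow> L-lipschitz_on {0..1} (g m)"
    and joins: "\<And>m. m < 3 \<Longrightarrow> g m 1 = g (Suc m) 0"
  shows "(4*L)-lipschitz_on {0..1} (concat4 g)"
proof -
  have piece: "(4*L)-lipschitz_on {c/4..(c+1)/4} (\<lambda>t. g m (4*t - c))" if "m < 4" for m and c :: real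
    using lipschitz_on_rescaled_piece[OF L[OF that]] .
  have "(4*L)-lipschitz_on {0..1/2} (\<lambda>t. if t \<le> 1/4 then g 0 (4*t) else g 1 (4*t-1))"
    by (rule lipschitz_on_concat) (use piece[of 0 0] piece[of 1 1] joins[of 0] in simp_all)
  then have "(4*L)-lipschitz_on {0..3/4}
      (\<lambda>t. if t \<le> 1/2 then (if t \<le> 1/4 then g 0 (4*t) else g 1 (4*t-1)) else g 2 (4*t-2))"
    by (rule lipschitz_on_concat) (use piece[of 2 2] joins[of 1] in \<open>simp_all add: numeral_2_eq_2\<close>)
  then show ?thesis unfolding concat4_def
    by (rule lipschitz_on_concat) (use piece[of 3 3] joins[of 2] in \<open>simp_all add: numeral_3_eq_3\<close>)
qed

lemma concat4_0: "concat4 g 0 = g 0 0" and concat4_1: "concat4 g 1 = g 3 1"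
  by (simp_all add: concat4_def)

lemma image_concat4:
  assumes joins: "\<And>m. m < 3 \<Longrightarrow> g m 1 = g (Suc m) 0"
  shows "concat4 g ` {0..1} = (\<Union>m<4. g m ` {0..1})"
proof
  show "concat4 g ` {0..1} \<subseteq> (\<Union>m<4. g m ` {0..1})"
  proof
    fix y assume "y \<in> concat4 g ` {0..1}"
    then obtain t where t: "t \<in> {0..1}" "y = concat4 g t" by auto
    consider "t \<le> 1/4" | "1/4 < t" "t \<le> 1/2" | "1/2 < t" "t \<le> 3/4" | "3/4 < t" by linarith
    then show "y \<in> (\<Union>m<4. g m ` {0..1})"
    proof cases
      case 1 then show ?thesis using t by (intro UN_I[of 0]) (auto simp: concat4_def)
    next
      case 2 then show ?thesis using t by (intro UN_I[of 1]) (auto simp: concat4_def)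
    next
      case 3 then show ?thesis using t by (intro UN_I[of 2]) (auto simp: concat4_def)
    next
      case 4 then show ?thesis using t by (intro UN_I[of 3]) (auto simp: concat4_def)
    qed
  qed
next
  show "(\<Union>m<4. g m ` {0..1}) \<subseteq> concat4 g ` {0..1}"
  proof
    fix y assume "y \<in> (\<Union>m<4. g m ` {0..1})"
    then obtain m u where m: "m < 4" and u: "u \<in> {0..1}" and y: "y = g m u" by auto
    show "y \<in> concat4 g ` {0..1}"
    proof (cases "u = 0 \<and> m > 0")
      case True
      then obtain m' where m': "m = Suc m'" "m' < 3" using m by (cases m) auto
      have "y = concat4 g ((1 + real m') / 4)"
        using True joins[OF m'(2)] y m' by (auto simp: concat4_def less_Suc_eq numeral_eq_Suc)
      moreover have "(1 + real m') / 4 \<in> {0..1}" using m'(2) by auto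
      ultimately show ?thesis by blast
    next
      case False
      then have "y = concat4 g ((u + real m) / 4)"
        using m u y by (auto simp: concat4_def field_simps less_Suc_eq numeral_eq_Suc)
      moreover have "(u + real m) / 4 \<in> {0..1}" using m u by auto
      ultimately show ?thesis by blast
    qed
  qed
qed

lemma lipschitz_linepath: "lipschitz_on (dist a b) A (linepath a b)"
proof (rule lipschitz_onI)
  fix x y :: real
  have "linepath a b x - linepath a b y = (x - y) *\<^sub>R (b - a)"
    by (simp add: linepath_def algebra_simps)
  then show "dist (linepath a b x) (linepath a b y) \<le> dist a b * dist x y"
    by (simp add: dist_norm dist_real_def norm_minus_commute)
qed simp

section \<open>One-dimensional Hausdorff measure\<close>

lemma diameter_lipschitz_image_le:
  fixes \<gamma> :: "real \<Rightarrow> 'a::real_normed_vector"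
  assumes L: "L-lipschitz_on A \<gamma>" and B: "B \<subseteq> A" and h: "\<And>s t. s \<in> B \<Longrightarrow> t \<in> B \<Longrightarrow> dist s t \<le> h" "0 \<le> h"
  shows "diameter (\<gamma> ` B) \<le> L * h"
proof (rule diameter_le)
  show "\<gamma> ` B \<noteq> {} \<or> 0 \<le> L * h" using lipschitz_on_nonneg[OF L] h(2) by simp
  fix x y assume "x \<in> \<gamma> ` B" "y \<in> \<gamma> ` B"
  then obtain s t where st: "s \<in> B" "t \<in> B" "x = \<gamma> s" "y = \<gamma> t" by blast
  have "dist x y \<le> L * dist s t" using lipschitz_onD[OF L] st B by blast
  also have "\<dots> \<le> L * h" using h(1)[OF st(1,2)] lipschitz_on_nonneg[OF L] by (simp add: mult_left_mono)
  finally show "norm (x - y) \<le> L * h" by (simp add: dist_norm)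
qed

lemma hausdorff1_pre_le_finite_cover:
  fixes U :: "nat \<Rightarrow> complex set"
  assumes cover: "E \<subseteq> (\<Union>i\<le>N. U i)" and U: "\<And>i. i \<le> N \<Longrightarrow> bounded (U i) \<and> diameter (U i) \<le> \<delta>"
    and "0 \<le> \<delta>"
  shows "hausdorff1_pre \<delta> E \<le> (\<Sum>i\<le>N. ennreal (diameter (U i)))"
proof -
  define V where "V i = (if i \<le> N then U i else {})" for i
  have "V \<in> {V. E \<subseteq> (\<Union>i. V i) \<and> (\<forall>i. bounded (V i) \<and> diameter (V i) \<le> \<delta>)}"
    using cover U \<open>0 \<le> \<delta>\<close> by (auto simp: V_def)
  then have "hausdorff1_pre \<delta> E \<le> (\<Sum>i. ennreal (diameter (V i)))"
    unfolding hausdorff1_pre_def by (rule INF_lower)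
  also have "\<dots> = (\<Sum>i\<le>N. ennreal (diameter (V i)))"
    by (rule suminf_finite) (auto simp: V_def)
  finally show ?thesis by (simp add: V_def)
qed

lemma unit_interval_in_piece:
  assumes "t \<in> {0..1}" "0 < N"
  shows "\<exists>i\<le>N. t \<in> {real i / N..(real i + 1) / N}"
proof (intro exI conjI)
  define i where "i = nat \<lfloor>t * N\<rfloor>"
  have i: "real i \<le> t * N" "t * N < real i + 1"
    unfolding i_def using assms by auto
  have "t * N \<le> 1 * real N" using assms by (intro mult_right_mono) auto
  then show "i \<le> N" using i(1) by simp
  show "t \<in> {real i / N..(real i + 1) / N}"
    using i assms(2) by (auto simp: field_simps)
qed

lemma hausdorff1_lipschitz_image_le:
  fixes \<gamma> :: "real \<Rightarrow> complex"
  assumes L: "L-lipschitz_on {0..1} \<gamma>"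
  shows "hausdorff1 (\<gamma> ` {0..1}) \<le> ennreal (2 * L)"
  unfolding hausdorff1_def
proof (rule SUP_least)
  fix \<delta> :: real assume "\<delta> \<in> {0<..}"
  have L0: "0 \<le> L" using lipschitz_on_nonneg[OF L] .
  obtain N :: nat where N: "L / \<delta> < N" using reals_Archimedean2 by blast
  moreover have "0 \<le> L / \<delta>" using L0 \<open>\<delta> \<in> {0<..}\<close> by simp
  ultimately have Npos: "0 < N" by linarith
  have LN: "L / N \<le> \<delta>" using N Npos \<open>\<delta> \<in> {0<..}\<close> by (simp add: field_simps)
  define U where "U i = \<gamma> ` ({real i / N..(real i + 1) / N} \<inter> {0..1})" for i :: nat
  have "bounded (\<gamma> ` {0..1})"
    using compact_continuous_image[OF lipschitz_on_continuous_on[OF L]] compact_imp_bounded by blast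
  then have "bounded (U i)" for i unfolding U_def by (rule bounded_subset) (intro image_mono Int_lower2)
  moreover have "diameter (U i) \<le> L * (1/N)" for i
    unfolding U_def
  proof (rule diameter_lipschitz_image_le[OF L])
    fix s t assume "s \<in> {real i / N..(real i + 1) / N} \<inter> {0..1}" "t \<in> {real i / N..(real i + 1) / N} \<inter> {0..1}"
    then have "\<bar>s - t\<bar> \<le> (real i + 1) / N - real i / N" by (auto simp: abs_le_iff)
    then show "dist s t \<le> 1/N" by (simp add: dist_real_def add_divide_distrib)
  qed auto
  moreover have "\<gamma> ` {0..1} \<subseteq> (\<Union>i\<le>N. U i)"
    unfolding U_def using unit_interval_in_piece[OF _ Npos] by fastforce
  ultimately have "hausdorff1_pre \<delta> (\<gamma> ` {0..1}) \<le> (\<Sum>i\<le>N. ennreal (diameter (U i)))"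
    using LN \<open>\<delta> \<in> {0<..}\<close> by (intro hausdorff1_pre_le_finite_cover) (auto intro: order_trans)
  also have "\<dots> \<le> (\<Sum>i\<le>N. ennreal (L / N))"
    by (rule sum_mono) (use \<open>\<And>i. diameter (U i) \<le> L * (1/N)\<close> in \<open>simp add: ennreal_leI\<close>)
  also have "\<dots> = ennreal (\<Sum>i\<le>N. L / N)" using L0 by (intro sum_ennreal) simp
  also have "\<dots> \<le> ennreal (2 * L)"
  proof (rule ennreal_leI)
    have "(\<Sum>i\<le>N. L / N) = L + L / N" using Npos by (simp add: field_simps)
    also have "L / N \<le> L" using Npos L0 by (simp add: divide_le_eq_1 field_simps mult_le_cancel_left1)
    finally show "(\<Sum>i\<le>N. L / N) \<le> 2 * L" by simp
  qed
  finally show "hausdorff1_pre \<delta> (\<gamma> ` {0..1}) \<le> ennreal (2 * L)" .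
qed

lemma interval_cover_radii_sum_ge:
  fixes c d :: "nat \<Rightarrow> real"
  assumes cover: "{0..\<rho>} \<subseteq> (\<Union>i. {c i - d i..c i + d i})" and d: "\<And>i. 0 \<le> d i" and "0 \<le> \<rho>"
  shows "ennreal (\<rho>/2) \<le> (\<Sum>i. ennreal (d i))"
proof -
  have "ennreal \<rho> = emeasure lborel {0..\<rho>}" using \<open>0 \<le> \<rho>\<close> by simp
  also have "\<dots> \<le> emeasure lborel (\<Union>i. {c i - d i..c i + d i})"
    by (rule emeasure_mono[OF cover]) auto
  also have "\<dots> \<le> (\<Sum>i. emeasure lborel {c i - d i..c i + d i})"
    by (rule emeasure_subadditive_countably) auto
  also have "\<dots> = (\<Sum>i. 2 * ennreal (d i))"
    using d by (simp add: ennreal_mult flip: mult_2)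
  also have "\<dots> = 2 * (\<Sum>i. ennreal (d i))" by simp
  finally have "2 * ennreal (\<rho>/2) \<le> 2 * (\<Sum>i. ennreal (d i))"
    using ennreal_mult[of 2 "\<rho>/2"] \<open>0 \<le> \<rho>\<close> by simp
  then show ?thesis by (subst (asm) ennreal_mult_le_mult_iff) auto
qed

text \<open>Distance from y projects a cover of the part of the continuum within distance \<rho> of y onto
  a cover of [0, \<rho>] by intervals of twice the diameters.\<close>
lemma connected_cover_diameter_sum_ge:
  fixes \<Gamma> :: "complex set" and U :: "nat \<Rightarrow> complex set"
  assumes "connected \<Gamma>" "y \<in> \<Gamma>" "p \<in> \<Gamma>" "\<rho> \<le> dist y p" "0 \<le> \<rho>"
    and cover: "\<Gamma> \<inter> cball y \<rho> \<subseteq> (\<Union>i. U i)" and bounded: "\<And>i. bounded (U i)"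
  shows "ennreal (\<rho>/2) \<le> (\<Sum>i. ennreal (diameter (U i)))"
proof (rule interval_cover_radii_sum_ge)
  have "connected (dist y ` \<Gamma>)"
    using \<open>connected \<Gamma>\<close> by (rule connected_continuous_image[rotated]) (intro continuous_intros)
  then have Icc: "{dist y y..dist y p} \<subseteq> dist y ` \<Gamma>"
    by (rule connected_contains_Icc) (use assms(2,3) in auto)
  define c where "c i = dist y (SOME u. u \<in> U i)" for i
  show "{0..\<rho>} \<subseteq> (\<Union>i. {c i - diameter (U i)..c i + diameter (U i)})"
  proof
    fix t assume t: "t \<in> {0..\<rho>}"
    then obtain x where x: "x \<in> \<Gamma>" "dist y x = t" using Icc assms(4) by fastforce
    then have "x \<in> cball y \<rho>" using t by auto
    then obtain i where i: "x \<in> U i" using cover x by blast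
    then have "(SOME u. u \<in> U i) \<in> U i" by (rule someI)
    then have "dist x (SOME u. u \<in> U i) \<le> diameter (U i)"
      by (rule diameter_bounded_bound[OF bounded i])
    moreover have "\<bar>dist y x - c i\<bar> \<le> dist x (SOME u. u \<in> U i)"
      unfolding c_def by (smt (verit) dist_commute dist_triangle)
    ultimately show "t \<in> (\<Union>i. {c i - diameter (U i)..c i + diameter (U i)})"
      using x(2) by (intro UN_I[of i]) auto
  qed
qed (use bounded diameter_ge_0 assms(5) in auto)

lemma separated_cballs_meeting_bounded:
  fixes U :: "'a::real_normed_vector set"
  assumes "bounded U" "U \<inter> cball y \<rho> \<noteq> {}" "U \<inter> cball y' \<rho> \<noteq> {}"
  shows "dist y y' \<le> 2 * \<rho> + diameter U"
proof -
  obtain a b where ab: "a \<in> U" "dist y a \<le> \<rho>" "b \<in> U" "dist y' b \<le> \<rho>" using assms(2,3) by auto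
  have "dist a b \<le> diameter U" by (rule diameter_bounded_bound[OF assms(1) ab(1,3)])
  then show ?thesis using ab dist_triangle[of y y' a] dist_triangle[of a y' b] by (simp add: dist_commute)
qed

lemma sum_diameter_meeting_separated_cballs_le:
  fixes U :: "'a::real_normed_vector set"
  assumes "finite Y" "bounded U"
    and sep: "\<And>y y'. y \<in> Y \<Longrightarrow> y' \<in> Y \<Longrightarrow> y \<noteq> y' \<Longrightarrow> 2 * \<rho> + diameter U < dist y y'"
  shows "(\<Sum>y\<in>Y. ennreal (diameter (if U \<inter> cball y \<rho> = {} then {} else U))) \<le> ennreal (diameter U)"
proof -
  define Y' where "Y' = {y \<in> Y. U \<inter> cball y \<rho> \<noteq> {}}"
  have "finite Y'" using assms(1) by (simp add: Y'_def)
  moreover have "y = y'" if "y \<in> Y'" "y' \<in> Y'" for y y'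
    using separated_cballs_meeting_bounded[OF assms(2), of y \<rho> y'] sep[of y y'] that
    by (force simp: Y'_def)
  ultimately have "card Y' \<le> 1" by (simp add: card_le_Suc0_iff_eq)
  have "(\<Sum>y\<in>Y. ennreal (diameter (if U \<inter> cball y \<rho> = {} then {} else U)))
      = (\<Sum>y\<in>Y. if U \<inter> cball y \<rho> \<noteq> {} then ennreal (diameter U) else 0)"
    by (rule sum.cong) auto
  also have "\<dots> = (\<Sum>y\<in>Y'. ennreal (diameter U))"
    unfolding Y'_def by (rule sum.inter_filter[OF assms(1), symmetric])
  also have "\<dots> = of_nat (card Y') * ennreal (diameter U)" by simp
  also have "\<dots> \<le> 1 * ennreal (diameter U)"
    using \<open>card Y' \<le> 1\<close> by (intro mult_right_mono) auto
  finally show ?thesis by simp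
qed

lemma hausdorff1_ge_separated_points:
  fixes \<Gamma> :: "complex set"
  assumes conn: "connected \<Gamma>" and fin: "finite Y" and "Y \<subseteq> \<Gamma>" and "0 \<le> \<rho>" and "0 < \<delta>"
    and arms: "\<And>y. y \<in> Y \<Longrightarrow> \<exists>p\<in>\<Gamma>. \<rho> \<le> dist y p"
    and sep: "\<And>y y'. y \<in> Y \<Longrightarrow> y' \<in> Y \<Longrightarrow> y \<noteq> y' \<Longrightarrow> 2 * \<rho> + \<delta> < dist y y'"
  shows "ennreal (card Y * (\<rho>/2)) \<le> hausdorff1 \<Gamma>"
proof -
  have "ennreal (card Y * (\<rho>/2)) \<le> hausdorff1_pre \<delta> \<Gamma>"
    unfolding hausdorff1_pre_def
  proof (rule INF_greatest)
    fix U :: "nat \<Rightarrow> complex set"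
    assume "U \<in> {U. \<Gamma> \<subseteq> (\<Union>i. U i) \<and> (\<forall>i. bounded (U i) \<and> diameter (U i) \<le> \<delta>)}"
    then have cover: "\<Gamma> \<subseteq> (\<Union>i. U i)" and bounded: "\<And>i. bounded (U i)"
      and diam: "\<And>i. diameter (U i) \<le> \<delta>" by auto
    define V where "V y i = (if U i \<inter> cball y \<rho> = {} then {} else U i)" for y i
    have arm: "ennreal (\<rho>/2) \<le> (\<Sum>i. ennreal (diameter (V y i)))" if y: "y \<in> Y" for y
    proof -
      obtain p where "p \<in> \<Gamma>" "\<rho> \<le> dist y p" using arms[OF y] by blast
      moreover have "\<Gamma> \<inter> cball y \<rho> \<subseteq> (\<Union>i. V y i)" using cover by (fastforce simp: V_def)
      ultimately show ?thesis using y \<open>Y \<subseteq> \<Gamma>\<close> \<open>0 \<le> \<rho>\<close> bounded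
        by (intro connected_cover_diameter_sum_ge[OF conn]) (auto simp: V_def)
    qed
    have at_most_one: "(\<Sum>y\<in>Y. ennreal (diameter (V y i))) \<le> ennreal (diameter (U i))" for i
      unfolding V_def
    proof (rule sum_diameter_meeting_separated_cballs_le[OF fin bounded])
      fix y y' assume "y \<in> Y" "y' \<in> Y" "y \<noteq> y'"
      then show "2 * \<rho> + diameter (U i) < dist y y'" using sep[of y y'] diam[of i] by linarith
    qed
    have "ennreal (card Y * (\<rho>/2)) = (\<Sum>y\<in>Y. ennreal (\<rho>/2))" using \<open>0 \<le> \<rho>\<close> by (subst sum_ennreal) auto
    also have "\<dots> \<le> (\<Sum>y\<in>Y. \<Sum>i. ennreal (diameter (V y i)))" by (rule sum_mono) (rule arm)
    also have "\<dots> = (\<Sum>i. \<Sum>y\<in>Y. ennreal (diameter (V y i)))" by (rule suminf_sum[symmetric]) simp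
    also have "\<dots> \<le> (\<Sum>i. ennreal (diameter (U i)))" by (rule suminf_le) (use at_most_one in auto)
    finally show "ennreal (card Y * (\<rho>/2)) \<le> (\<Sum>i. ennreal (diameter (U i)))" .
  qed
  also have "\<dots> \<le> hausdorff1 \<Gamma>" unfolding hausdorff1_def by (rule SUP_upper) (use \<open>0 < \<delta>\<close> in auto)
  finally show ?thesis .
qed

lemma mem_nbhd_closed:
  assumes "closed A" "A \<noteq> {}"
  shows "x \<in> nbhd A \<rho> \<longleftrightarrow> (\<exists>a\<in>A. dist x a \<le> \<rho>)"
proof
  assume "x \<in> nbhd A \<rho>"
  moreover obtain a where "a \<in> A" "infdist x A = dist x a" using infdist_attains_inf[OF assms] by blast
  ultimately show "\<exists>a\<in>A. dist x a \<le> \<rho>" by (auto simp: nbhd_def)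
next
  assume "\<exists>a\<in>A. dist x a \<le> \<rho>"
  then obtain a where "a \<in> A" "dist x a \<le> \<rho>" by blast
  then show "x \<in> nbhd A \<rho>" using infdist_le[of a A x] by (simp add: nbhd_def)
qed

lemma rect_curve_compact_connected:
  assumes "rect_curve \<Gamma>" shows "compact \<Gamma>" "connected \<Gamma>" "\<Gamma> \<noteq> {}"
proof -
  obtain \<gamma> :: "real \<Rightarrow> complex" and L :: real
    where \<gamma>: "L-lipschitz_on {0..1} \<gamma>" "\<Gamma> = \<gamma> ` {0..1}"
    using assms unfolding rect_curve_def by blast
  have "continuous_on {0..1} \<gamma>" using lipschitz_on_continuous_on[OF \<gamma>(1)] .
  then show "compact \<Gamma>" "connected \<Gamma>" "\<Gamma> \<noteq> {}"
    unfolding \<gamma>(2) by (auto intro: compact_continuous_image connected_continuous_image)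
qed

lemma mem_nbhd_rect_curve:
  assumes "rect_curve \<Gamma>" shows "x \<in> nbhd \<Gamma> \<rho> \<longleftrightarrow> (\<exists>p\<in>\<Gamma>. dist x p \<le> \<rho>)"
  using rect_curve_compact_connected[OF assms] by (intro mem_nbhd_closed compact_imp_closed)

lemma disjoint_balls_dist_ge:
  fixes q q' :: "'a::real_normed_vector"
  assumes "ball q R \<inter> ball q' R = {}" shows "2 * R \<le> dist q q'"
proof (rule ccontr)
  assume "\<not> 2 * R \<le> dist q q'"
  then have "midpoint q q' \<in> ball q R \<inter> ball q' R" by (simp add: dist_midpoint)
  then show False using assms by blast
qed

lemma INT_UN_decseq_subset:
  fixes B :: "'i \<Rightarrow> nat \<Rightarrow> 'a set"
  assumes "finite I" "\<And>i. i \<in> I \<Longrightarrow> decseq (B i)"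
  shows "(\<Inter>n. \<Union>i\<in>I. B i n) \<subseteq> (\<Union>i\<in>I. \<Inter>n. B i n)"
proof
  fix x assume x: "x \<in> (\<Inter>n. \<Union>i\<in>I. B i n)"
  show "x \<in> (\<Union>i\<in>I. \<Inter>n. B i n)"
  proof (rule ccontr)
    assume "x \<notin> (\<Union>i\<in>I. \<Inter>n. B i n)"
    then have "\<forall>i\<in>I. \<exists>n. x \<notin> B i n" by blast
    then obtain n where n: "\<forall>i\<in>I. x \<notin> B i (n i)" by (rule bchoice[elim_format]) blast
    obtain i where i: "i \<in> I" "x \<in> B i (Max (n ` I))" using x by blast
    have "n i \<le> Max (n ` I)" using assms(1) i(1) by simp
    then have "B i (Max (n ` I)) \<subseteq> B i (n i)" using assms(2)[OF i(1)] by (rule decseqD[rotated])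
    then show False using n i by blast
  qed
qed

lemma ennreal_two_sided_comparison:
  assumes A: "ennreal a \<le> A" "A \<le> ennreal b" and B: "ennreal (c * x) \<le> B" "B \<le> ennreal (d * x)"
    and "0 \<le> a" "0 \<le> b" "0 \<le> x" "0 < C" "b \<le> C * c" "d \<le> C * a"
  shows "ennreal (1/C) * A * ennreal x \<le> B \<and> B \<le> ennreal C * A * ennreal x"
proof
  have "ennreal (1/C) * A * ennreal x \<le> ennreal (1/C) * ennreal b * ennreal x"
    using A(2) by (intro mult_right_mono mult_left_mono) auto
  also have "\<dots> = ennreal (b / C * x)" using assms by (simp add: ennreal_mult[symmetric])
  also have "\<dots> \<le> ennreal (c * x)"
    using assms by (intro ennreal_leI mult_right_mono) (simp_all add: field_simps)
  finally show "ennreal (1/C) * A * ennreal x \<le> B" using B(1) by simp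
  have "B \<le> ennreal (C * a * x)"
    using B(2) assms by (metis ennreal_leI mult_right_mono order_trans)
  also have "\<dots> = ennreal C * ennreal a * ennreal x" using assms by (simp add: ennreal_mult)
  also have "\<dots> \<le> ennreal C * A * ennreal x" using A(1) by (intro mult_right_mono mult_left_mono) auto
  finally show "B \<le> ennreal C * A * ennreal x" .
qed

section \<open>The Koch maps and the triangle\<close>

definition koch_map :: "nat \<Rightarrow> complex \<Rightarrow> complex" where
  "koch_map i = [koch_f1, koch_f2, koch_f3, koch_f4] ! i"

lemma koch_map_affine: "i < 4 \<Longrightarrow> \<exists>a b. cmod b = 1 \<and> koch_map i = (\<lambda>z. a + b * z / 3)"
proof -
  assume "i < 4"
  then consider "i = 0" | "i = 1" | "i = 2" | "i = 3" by linarith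
  then show ?thesis
  proof cases
    case 1 then show ?thesis
      by (intro exI[of _ 0] exI[of _ 1]) (auto simp: koch_map_def koch_f1_def)
  next
    case 2 then show ?thesis
      by (intro exI[of _ "1/3"] exI[of _ "cis (pi/3)"]) (auto simp: koch_map_def koch_f2_def)
  next
    case 3 then show ?thesis
      by (intro exI[of _ "1/2 + complex_of_real (sqrt 3 / 6) * \<i>"] exI[of _ "cis (-pi/3)"])
        (auto simp: koch_map_def koch_f3_def)
  next
    case 4 then show ?thesis
      by (intro exI[of _ "2/3"] exI[of _ 1]) (auto simp: koch_map_def koch_f4_def)
  qed
qed

lemma dist_koch_map: "i < 4 \<Longrightarrow> dist (koch_map i x) (koch_map i y) = dist x y / 3"
  by (auto dest!: koch_map_affine simp: dist_norm norm_mult norm_divide simp flip: right_diff_distrib diff_divide_distrib)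

lemma lipschitz_koch_map: "i < 4 \<Longrightarrow> (1/3)-lipschitz_on A (koch_map i)"
  by (rule lipschitz_onI) (simp_all add: dist_koch_map)

lemma inj_koch_map: "i < 4 \<Longrightarrow> inj (koch_map i)"
proof (rule injI)
  fix x y assume "i < 4" "koch_map i x = koch_map i y"
  then show "x = y" using dist_koch_map[of i x y] by simp
qed

lemma surj_koch_map: "i < 4 \<Longrightarrow> surj (koch_map i)"
proof -
  assume "i < 4"
  then obtain a b where b: "cmod b = 1" and f: "koch_map i = (\<lambda>z. a + b * z / 3)"
    using koch_map_affine by blast
  have "b \<noteq> 0" using b by auto
  then have "koch_map i (3 * (y - a) / b) = y" for y
    by (simp add: f field_simps)
  then show ?thesis unfolding surj_def by metis
qed

lemma bij_koch_map: "i < 4 \<Longrightarrow> bij (koch_map i)"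
  by (simp add: bij_def inj_koch_map surj_koch_map)

lemma continuous_on_koch_map: "i < 4 \<Longrightarrow> continuous_on A (koch_map i)"
  by (auto dest!: koch_map_affine intro!: continuous_intros)

lemma ball_koch_map_subset: "i < 4 \<Longrightarrow> ball (koch_map i q) (R/3) \<subseteq> koch_map i ` ball q R"
proof
  fix z assume i: "i < 4" and z: "z \<in> ball (koch_map i q) (R/3)"
  obtain z' where z': "z = koch_map i z'" using surj_koch_map[OF i] by (metis surjD)
  have "dist q z' = 3 * dist (koch_map i q) z" using dist_koch_map[OF i, of q z'] z' by simp
  then show "z \<in> koch_map i ` ball q R" using z z' by auto
qed

lemma cis_pi_third: "cis (pi/3) = Complex (1/2) (sqrt 3/2)" "cis (- pi/3) = Complex (1/2) (- sqrt 3/2)"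
  by (simp_all add: cis.ctr cos_60 sin_60)

text \<open>In the coordinates (Re z, sqrt 3 * Im z) the four Koch maps have rational coefficients,
  so all incidences between the triangle below and its images become linear arithmetic.\<close>
definition scaled_Im :: "complex \<Rightarrow> real" where
  "scaled_Im z = sqrt 3 * Im z"

lemma koch_f_coords:
  "Re (koch_f1 z) = Re z / 3" "scaled_Im (koch_f1 z) = scaled_Im z / 3"
  "Re (koch_f2 z) = 1/3 + (Re z - scaled_Im z) / 6" "scaled_Im (koch_f2 z) = (3 * Re z + scaled_Im z) / 6"
  "Re (koch_f3 z) = 1/2 + (Re z + scaled_Im z) / 6" "scaled_Im (koch_f3 z) = 1/2 + (scaled_Im z - 3 * Re z) / 6"
  "Re (koch_f4 z) = 2/3 + Re z / 3" "scaled_Im (koch_f4 z) = scaled_Im z / 3"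
  by (simp_all add: scaled_Im_def koch_f1_def koch_f2_def koch_f3_def koch_f4_def cis_pi_third cos_60 sin_60 field_simps)

definition koch_triangle :: "complex set" where
  "koch_triangle = {z. 0 \<le> scaled_Im z \<and> scaled_Im z \<le> Re z \<and> scaled_Im z \<le> 1 - Re z}"

text \<open>The interior of the triangle witnesses the open set condition: it is mapped into itself by
  each Koch map, and its four images are pairwise disjoint.\<close>
definition koch_triangle_inner :: "complex set" where
  "koch_triangle_inner = {z. 0 < scaled_Im z \<and> scaled_Im z < Re z \<and> scaled_Im z < 1 - Re z}"

lemma koch_map_triangle:
  assumes "i < 4" "z \<in> koch_triangle" shows "koch_map i z \<in> koch_triangle"
proof -
  have "i = 0 \<or> i = 1 \<or> i = 2 \<or> i = 3" using assms(1) by auto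
  then show ?thesis using assms(2) by (auto simp: koch_triangle_def koch_map_def koch_f_coords field_simps)
qed

lemma koch_map_triangle_inner:
  assumes "i < 4" "z \<in> koch_triangle_inner" shows "koch_map i z \<in> koch_triangle_inner"
proof -
  have "i = 0 \<or> i = 1 \<or> i = 2 \<or> i = 3" using assms(1) by auto
  then show ?thesis using assms(2) by (auto simp: koch_triangle_inner_def koch_map_def koch_f_coords field_simps)
qed

lemma koch_map_inner_disjoint:
  assumes "i < 4" "j < 4" "i \<noteq> j" "z \<in> koch_triangle_inner" "w \<in> koch_triangle_inner"
  shows "koch_map i z \<noteq> koch_map j w"
proof
  assume "koch_map i z = koch_map j w"
  then have "Re (koch_map i z) = Re (koch_map j w)" "scaled_Im (koch_map i z) = scaled_Im (koch_map j w)"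
    by simp_all
  moreover have "i = 0 \<or> i = 1 \<or> i = 2 \<or> i = 3" "j = 0 \<or> j = 1 \<or> j = 2 \<or> j = 3" using assms by auto
  ultimately show False using assms(3-5)
    by (auto simp: koch_triangle_inner_def koch_map_def koch_f_coords field_simps)
qed

lemma koch_map_images_disjoint:
  assumes "i < 4" "j < 4" "U \<subseteq> koch_triangle_inner" "V \<subseteq> koch_triangle_inner" "i = j \<Longrightarrow> U \<inter> V = {}"
  shows "koch_map i ` U \<inter> koch_map j ` V = {}"
proof (cases "i = j")
  case True
  then show ?thesis using assms(5) inj_koch_map[OF assms(1)] by (auto simp: inj_eq)
next
  case False
  then show ?thesis using koch_map_inner_disjoint[OF assms(1,2) False] assms(3,4) by blast
qed

lemma koch_triangle_inner_subset: "koch_triangle_inner \<subseteq> koch_triangle"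
  by (auto simp: koch_triangle_def koch_triangle_inner_def)

lemma closed_koch_triangle: "closed koch_triangle"
  unfolding koch_triangle_def scaled_Im_def
  by (intro closed_Collect_conj closed_Collect_le continuous_intros)

lemma open_koch_triangle_inner: "open koch_triangle_inner"
  unfolding koch_triangle_inner_def scaled_Im_def
  by (intro open_Collect_conj open_Collect_less continuous_intros)

lemma sqrt3_bounds: "1.7 < sqrt (3::real)" "sqrt (3::real) < 1.8"
  by (rule real_less_rsqrt, simp add: power2_eq_square) (rule real_less_lsqrt, simp_all add: power2_eq_square)

lemma koch_triangle_bounds:
  assumes "z \<in> koch_triangle" shows "0 \<le> Re z" "Re z \<le> 1" "0 \<le> Im z" "Im z \<le> sqrt 3 / 6"
proof -
  have s: "0 \<le> scaled_Im z" "scaled_Im z \<le> Re z" "scaled_Im z \<le> 1 - Re z"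
    using assms by (auto simp: koch_triangle_def)
  then show "0 \<le> Re z" "Re z \<le> 1" by linarith+
  have "sqrt 3 * (sqrt 3 * Im z) \<le> sqrt 3 * (1/2)"
    using s by (intro mult_left_mono) (auto simp: scaled_Im_def)
  then show "Im z \<le> sqrt 3 / 6" by (simp add: mult.assoc[symmetric])
  show "0 \<le> Im z" using s(1) by (simp add: scaled_Im_def zero_le_mult_iff)
qed

lemma compact_koch_triangle: "compact koch_triangle"
proof -
  have "koch_triangle \<subseteq> cball 0 2"
  proof
    fix z assume z: "z \<in> koch_triangle"
    then have "cmod z \<le> 2"
      using cmod_le[of z] koch_triangle_bounds[OF z] sqrt3_bounds by linarith
    then show "z \<in> cball 0 2" by simp
  qed
  then show ?thesis
    using closed_koch_triangle bounded_cball bounded_subset compact_eq_bounded_closed by blast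
qed

definition apex :: complex where "apex = Complex (1/2) (sqrt 3 / 6)"

lemma koch_f_endpoints:
  "koch_f1 0 = 0" "koch_f1 1 = 1/3" "koch_f2 0 = 1/3" "koch_f2 1 = apex"
  "koch_f3 0 = apex" "koch_f3 1 = 2/3" "koch_f4 0 = 2/3" "koch_f4 1 = 1"
  by (simp_all add: koch_f1_def koch_f2_def koch_f3_def koch_f4_def apex_def cis_pi_third cos_60 sin_60 complex_eq_iff)

lemma koch_map_joins: "m < 3 \<Longrightarrow> koch_map m 1 = koch_map (Suc m) 0"
  by (auto simp: koch_map_def less_Suc_eq numeral_eq_Suc koch_f_endpoints)

lemma koch_triangle_frontier:
  assumes "z \<in> koch_triangle" "z \<notin> koch_triangle_inner"
  shows "z \<in> closed_segment 0 1 \<union> closed_segment 0 apex \<union> closed_segment apex 1"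
proof -
  have s: "0 \<le> scaled_Im z" "scaled_Im z \<le> Re z" "scaled_Im z \<le> 1 - Re z"
    using assms(1) by (auto simp: koch_triangle_def)
  have Im: "Im z = scaled_Im z * sqrt 3 / 3"
    by (simp add: scaled_Im_def mult.commute[of "sqrt 3"] mult.assoc)
  consider "Im z = 0" | "scaled_Im z = Re z" | "scaled_Im z = 1 - Re z"
    using assms s by (fastforce simp: koch_triangle_inner_def scaled_Im_def)
  then show ?thesis
  proof cases
    case 1
    then have "z = (1 - Re z) *\<^sub>R 0 + Re z *\<^sub>R 1" by (simp add: complex_eq_iff)
    moreover have "0 \<le> Re z" "Re z \<le> 1" using s by linarith+
    ultimately have "z \<in> closed_segment 0 1" unfolding in_segment by blast
    then show ?thesis by blast
  next
    case 2
    then have "z = (1 - 2 * Re z) *\<^sub>R 0 + (2 * Re z) *\<^sub>R apex"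
      using Im by (simp add: complex_eq_iff apex_def)
    moreover have "0 \<le> 2 * Re z" "2 * Re z \<le> 1" using 2 s by linarith+
    ultimately have "z \<in> closed_segment 0 apex" unfolding in_segment by blast
    then show ?thesis by blast
  next
    case 3
    then have "z = (2 - 2 * Re z) *\<^sub>R apex + (1 - (2 - 2 * Re z)) *\<^sub>R 1"
      using Im by (simp add: complex_eq_iff apex_def algebra_simps) (metis distrib_right mult_1)
    moreover have "0 \<le> 1 - (2 - 2 * Re z)" "1 - (2 - 2 * Re z) \<le> 1" using 3 s by linarith+
    ultimately have "z \<in> closed_segment apex 1" unfolding in_segment
      by (intro exI[of _ "1 - (2 - 2 * Re z)"]) auto
    then show ?thesis by blast
  qed
qed

definition koch_inner_point :: complex where "koch_inner_point = koch_f2 (koch_f1 1)"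

lemma ball_koch_inner_point_subset: "ball koch_inner_point (1/20) \<subseteq> koch_triangle_inner"
proof
  fix z assume "z \<in> ball koch_inner_point (1/20)"
  then have d: "cmod (z - koch_inner_point) < 1/20" by (simp add: dist_norm norm_minus_commute)
  have "scaled_Im (1/3) = 0" by (simp add: scaled_Im_def)
  then have c: "Re koch_inner_point = 7/18" "scaled_Im koch_inner_point = 1/6"
    by (simp_all add: koch_inner_point_def koch_f_coords koch_f_endpoints)
  have "\<bar>Re z - Re koch_inner_point\<bar> < 1/20" "\<bar>Im z - Im koch_inner_point\<bar> < 1/20"
    using abs_Re_le_cmod[of "z - koch_inner_point"] abs_Im_le_cmod[of "z - koch_inner_point"] d by auto
  then have "\<bar>scaled_Im z - scaled_Im koch_inner_point\<bar> < sqrt 3 / 20"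
    by (simp add: scaled_Im_def abs_mult flip: right_diff_distrib)
  then have "\<bar>Re z - 7/18\<bar> < 1/20" "\<bar>scaled_Im z - 1/6\<bar> < 9/100"
    using \<open>\<bar>Re z - Re koch_inner_point\<bar> < 1/20\<close> c sqrt3_bounds by auto
  then show "z \<in> koch_triangle_inner"
    unfolding koch_triangle_inner_def abs_less_iff by simp
qed

section \<open>The Koch curve as an attractor\<close>

definition koch_invariant :: "complex set \<Rightarrow> bool" where
  "koch_invariant K \<longleftrightarrow> K = (\<Union>i<4. koch_map i ` K)"

lemma koch_invariant_iff:
  "koch_invariant K \<longleftrightarrow> K = koch_f1 ` K \<union> koch_f2 ` K \<union> koch_f3 ` K \<union> koch_f4 ` K"
proof -
  have "{..<4::nat} = {0, 1, 2, 3}" by auto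
  then show ?thesis by (simp add: koch_invariant_def koch_map_def Un_assoc)
qed

lemma koch_invariant_image_subset: "koch_invariant K \<Longrightarrow> i < 4 \<Longrightarrow> koch_map i ` K \<subseteq> K"
  unfolding koch_invariant_def by blast

lemma koch_invariant_subset_closed:
  assumes K: "compact K" "koch_invariant K"
    and C: "closed C" "C \<noteq> {}" "\<And>i. i < 4 \<Longrightarrow> koch_map i ` C \<subseteq> C"
  shows "K \<subseteq> C"
proof
  fix x assume x: "x \<in> K"
  obtain c0 where c0: "c0 \<in> C" using C by auto
  obtain D where D: "\<forall>y\<in>K. dist c0 y \<le> D"
    using compact_imp_bounded[OF K(1)] bounded_any_center by metis
  \<comment> \<open>each application of the maps shrinks the distance from K to C by the factor 1/3\<close>
  have shrink: "\<forall>y\<in>K. infdist y C \<le> D / 3^n" for n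
  proof (induction n)
    case 0 then show ?case
      using D c0 infdist_le[OF c0] by (auto simp: dist_commute intro: order_trans)
  next
    case (Suc n)
    show ?case
    proof
      fix y assume "y \<in> K"
      then obtain i y' where i: "i < 4" "y' \<in> K" "y = koch_map i y'"
        using K(2) unfolding koch_invariant_def by blast
      obtain c where c: "c \<in> C" "infdist y' C = dist y' c"
        using infdist_attains_inf[OF C(1,2)] by blast
      have "koch_map i c \<in> C" using C(3)[OF i(1)] c(1) by blast
      then have "infdist y C \<le> dist y (koch_map i c)" by (rule infdist_le)
      also have "\<dots> = dist y' c / 3" using dist_koch_map[OF i(1)] i(3) by simp
      also have "\<dots> \<le> (D / 3^n) / 3" using Suc.IH i(2) c(2) by (metis divide_right_mono zero_le_numeral)
      finally show "infdist y C \<le> D / 3 ^ Suc n" by simp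
    qed
  qed
  have "infdist x C \<le> 0"
  proof (rule field_le_epsilon)
    fix e :: real assume "0 < e"
    then obtain n where "D / e < 3^n" using real_arch_pow[of 3 "D / e"] by auto
    then have "D / 3^n \<le> 0 + e" using \<open>0 < e\<close> by (simp add: field_simps)
    then show "infdist x C \<le> 0 + e" using shrink[of n] x by fastforce
  qed
  then show "x \<in> C"
    using in_closed_iff_infdist_zero[OF C(1,2)] infdist_nonneg[of x C] by simp
qed

fun koch_iterate :: "nat \<Rightarrow> complex set" where
  "koch_iterate 0 = koch_triangle"
| "koch_iterate (Suc n) = (\<Union>i<4. koch_map i ` koch_iterate n)"

lemma compact_koch_iterate: "compact (koch_iterate n)"
  by (induction n) (auto intro!: compact_UN compact_continuous_image continuous_on_koch_map
      simp: compact_koch_triangle)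

lemma koch_map_fixpoint_in_iterate:
  assumes "i < 4" "koch_map i p = p" "p \<in> koch_triangle" shows "p \<in> koch_iterate n"
proof (induction n)
  case (Suc n)
  then have "koch_map i p \<in> koch_iterate (Suc n)" using assms(1) by auto
  then show ?case using assms(2) by simp
qed (use assms(3) in simp)

lemma decseq_koch_iterate: "decseq koch_iterate"
proof (rule decseq_SucI)
  show "koch_iterate (Suc n) \<subseteq> koch_iterate n" for n
  proof (induction n)
    case 0 then show ?case using koch_map_triangle by auto
  next
    case (Suc n) then show ?case by (simp add: UN_mono image_mono)
  qed
qed

definition koch_attractor :: "complex set" where "koch_attractor = (\<Inter>n. koch_iterate n)"

lemma koch_invariant_attractor: "koch_invariant koch_attractor"
proof -
  have image_INT: "koch_map i ` koch_attractor = (\<Inter>n. koch_map i ` koch_iterate n)" if "i < 4" for i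
    unfolding koch_attractor_def using bij_koch_map[OF that] by (rule bij_image_INT)
  have "koch_attractor \<subseteq> (\<Inter>n. koch_iterate (Suc n))"
    unfolding koch_attractor_def by blast
  also have "\<dots> \<subseteq> (\<Union>i<4. \<Inter>n. koch_map i ` koch_iterate n)"
    unfolding koch_iterate.simps
  proof (rule INT_UN_decseq_subset)
    show "decseq (\<lambda>n. koch_map i ` koch_iterate n)" for i
      using decseq_koch_iterate unfolding decseq_def by (blast intro: image_mono)
  qed simp
  finally have "koch_attractor \<subseteq> (\<Union>i<4. koch_map i ` koch_attractor)"
    using image_INT by simp
  moreover have "koch_map i ` koch_attractor \<subseteq> koch_iterate n" if "i < 4" for i n
  proof -
    have "koch_map i ` koch_attractor \<subseteq> koch_iterate (Suc n)"
      unfolding koch_attractor_def using that by auto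
    also have "\<dots> \<subseteq> koch_iterate n" using decseq_koch_iterate by (simp add: decseq_Suc_iff)
    finally show ?thesis .
  qed
  then have "(\<Union>i<4. koch_map i ` koch_attractor) \<subseteq> koch_attractor"
    unfolding koch_attractor_def by blast
  ultimately show ?thesis unfolding koch_invariant_def by blast
qed

lemma compact_koch_attractor: "compact koch_attractor"
  unfolding koch_attractor_def by (rule compact_Inter) (auto simp: compact_koch_iterate)

lemma zero_in_koch_attractor: "0 \<in> koch_attractor" and one_in_koch_attractor: "1 \<in> koch_attractor"
  unfolding koch_attractor_def
  by (auto intro: koch_map_fixpoint_in_iterate[of 0] koch_map_fixpoint_in_iterate[of 3]
      simp: koch_map_def koch_f_endpoints koch_triangle_def scaled_Im_def)

lemma koch_eq_attractor: "koch = koch_attractor"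
proof -
  note attractor = compact_koch_attractor koch_invariant_attractor
  have nonempty: "koch_attractor \<noteq> {}" using zero_in_koch_attractor by blast
  have unique: "K = koch_attractor" if K: "K \<noteq> {}" "compact K" "koch_invariant K" for K
  proof
    show "K \<subseteq> koch_attractor"
      by (rule koch_invariant_subset_closed[OF K(2,3) compact_imp_closed[OF attractor(1)]
            nonempty koch_invariant_image_subset[OF attractor(2)]])
    show "koch_attractor \<subseteq> K"
      by (rule koch_invariant_subset_closed[OF attractor compact_imp_closed[OF K(2)] K(1)
            koch_invariant_image_subset[OF K(3)]])
  qed
  show ?thesis unfolding koch_def koch_invariant_iff[symmetric]
  proof (rule the_equality)
    show "koch_attractor \<noteq> {} \<and> compact koch_attractor \<and> koch_invariant koch_attractor"
      using attractor nonempty by blast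
  qed (use unique in blast)
qed

lemma compact_koch: "compact koch"
  by (simp add: koch_eq_attractor compact_koch_attractor)

lemma koch_invariant_koch: "koch_invariant koch"
  by (simp add: koch_eq_attractor koch_invariant_attractor)

lemma koch_subset_triangle: "koch \<subseteq> koch_triangle"
  unfolding koch_eq_attractor koch_attractor_def by (metis INT_lower UNIV_I koch_iterate.simps(1))

lemma zero_in_koch: "0 \<in> koch" and one_in_koch: "1 \<in> koch"
  by (simp_all add: koch_eq_attractor zero_in_koch_attractor one_in_koch_attractor)

lemma koch_inner_point_in_koch: "koch_inner_point \<in> koch"
proof -
  have "koch_map 0 1 \<in> koch"
    using koch_invariant_image_subset[OF koch_invariant_koch, of 0] one_in_koch by auto
  then have "koch_map 1 (koch_map 0 1) \<in> koch"
    using koch_invariant_image_subset[OF koch_invariant_koch, of 1] by auto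
  then show ?thesis by (simp add: koch_inner_point_def koch_map_def)
qed

lemma mem_nbhd_koch: "x \<in> nbhd koch \<rho> \<longleftrightarrow> (\<exists>y\<in>koch. dist x y \<le> \<rho>)"
  by (rule mem_nbhd_closed[OF compact_imp_closed[OF compact_koch]]) (use zero_in_koch in blast)

section \<open>Upper bound: polygonal approximations\<close>

text \<open>The boundary of the triangle, traversed as 0, apex, 1, 0, 1 so that it ends at 1 like the
  images of the Koch maps that are glued onto it.\<close>
definition koch_base_vertex :: "nat \<Rightarrow> complex" where
  "koch_base_vertex m = [0, apex, 1, 0, 1] ! m"

fun koch_approx :: "nat \<Rightarrow> real \<Rightarrow> complex" where
  "koch_approx 0 = concat4 (\<lambda>m. linepath (koch_base_vertex m) (koch_base_vertex (Suc m)))"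
| "koch_approx (Suc j) = concat4 (\<lambda>m t. koch_map m (koch_approx j t))"

lemma koch_approx_0: "koch_approx j 0 = 0" and koch_approx_1: "koch_approx j 1 = 1"
  by (induction j) (simp_all add: concat4_0 concat4_1 koch_base_vertex_def koch_map_def koch_f_endpoints)

lemma koch_approx_joins: "m < 3 \<Longrightarrow> koch_map m (koch_approx j 1) = koch_map (Suc m) (koch_approx j 0)"
  by (simp add: koch_approx_0 koch_approx_1 koch_map_joins)

lemma lipschitz_koch_approx: "(4 * (4/3)^j)-lipschitz_on {0..1} (koch_approx j)"
proof (induction j)
  case 0
  have "dist apex 0 \<le> 1" "dist apex 1 \<le> 1"
    using cmod_le[of apex] cmod_le[of "apex - 1"] sqrt3_bounds by (simp_all add: dist_norm apex_def)
  then have "1-lipschitz_on {0..1} (linepath (koch_base_vertex m) (koch_base_vertex (Suc m)))"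
    if "m < 4" for m
    using that by (intro lipschitz_on_mono[OF lipschitz_linepath])
      (auto simp: koch_base_vertex_def less_Suc_eq numeral_eq_Suc dist_commute)
  moreover have "linepath (koch_base_vertex m) (koch_base_vertex (Suc m)) 1 =
      linepath (koch_base_vertex (Suc m)) (koch_base_vertex (Suc (Suc m))) 0" for m
    by (simp add: linepath_0' linepath_1')
  ultimately have "(4*1)-lipschitz_on {0..1} (koch_approx 0)"
    unfolding koch_approx.simps by (rule lipschitz_on_concat4)
  then show ?case by simp
next
  case (Suc j)
  have "(1/3 * (4 * (4/3)^j))-lipschitz_on {0..1} (\<lambda>t. koch_map m (koch_approx j t))" if "m < 4" for m
    by (rule lipschitz_on_compose2[OF Suc lipschitz_koch_map[OF that]])
  then have "(4 * (1/3 * (4 * (4/3)^j)))-lipschitz_on {0..1} (koch_approx (Suc j))"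
    unfolding koch_approx.simps by (rule lipschitz_on_concat4) (simp_all add: koch_approx_joins)
  then show ?case by (simp add: field_simps)
qed

lemma image_koch_approx_Suc:
  "koch_approx (Suc j) ` {0..1} = (\<Union>m<4. koch_map m ` koch_approx j ` {0..1})"
  unfolding koch_approx.simps
  by (subst image_concat4) (use koch_approx_joins in \<open>auto simp: image_image\<close>)

lemma koch_triangle_sides_subset_approx:
  "closed_segment 0 1 \<union> closed_segment 0 apex \<union> closed_segment apex 1 \<subseteq> koch_approx 0 ` {0..1}"
proof -
  have "koch_approx 0 ` {0..1} = (\<Union>m<4. closed_segment (koch_base_vertex m) (koch_base_vertex (Suc m)))"
    unfolding koch_approx.simps
    by (subst image_concat4) (simp_all add: linepath_0' linepath_1' path_image_linepath[unfolded path_image_def])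
  moreover have "{..<4::nat} = {0, 1, 2, 3}" by auto
  ultimately show ?thesis
    by (auto simp: koch_base_vertex_def numeral_eq_Suc closed_segment_commute[of 1 apex])
qed

lemma koch_approx_0_near:
  assumes y: "y \<in> koch_triangle" and d: "dist x y \<le> \<rho>" and \<rho>: "sqrt 3 / 6 \<le> \<rho>"
  shows "\<exists>p\<in>koch_approx 0 ` {0..1}. dist x p \<le> \<rho>"
proof (cases "x \<in> koch_triangle")
  case True
  note x = koch_triangle_bounds[OF True]
  have "complex_of_real (Re x) = (1 - Re x) *\<^sub>R 0 + Re x *\<^sub>R 1" by (simp add: complex_eq_iff)
  then have "complex_of_real (Re x) \<in> closed_segment 0 1" using x unfolding in_segment by blast
  then have "complex_of_real (Re x) \<in> koch_approx 0 ` {0..1}"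
    using koch_triangle_sides_subset_approx by blast
  moreover have "dist x (complex_of_real (Re x)) = Im x"
    using x by (simp add: dist_norm cmod_def)
  ultimately show ?thesis using x \<rho> by force
next
  case False
  \<comment> \<open>the segment from y to x leaves the triangle through one of its sides\<close>
  obtain p where p: "p \<in> closed_segment y x" "p \<in> frontier koch_triangle"
    using connected_Int_frontier[of "closed_segment y x" koch_triangle] y False by auto
  have "koch_triangle_inner \<subseteq> interior koch_triangle"
    using open_koch_triangle_inner koch_triangle_inner_subset interior_maximal by blast
  then have "p \<in> koch_triangle" "p \<notin> koch_triangle_inner"
    using p(2) closed_koch_triangle unfolding frontier_def by auto
  then have "p \<in> koch_approx 0 ` {0..1}"
    using koch_triangle_frontier koch_triangle_sides_subset_approx by blast
  moreover have "dist x p \<le> \<rho>" using dist_in_closed_segment[OF p(1)] d by (simp add: dist_commute)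
  ultimately show ?thesis by blast
qed

lemma koch_approx_near:
  assumes "y \<in> koch" "dist x y \<le> \<rho>" "sqrt 3 / 6 / 3^j \<le> \<rho>"
  shows "\<exists>p\<in>koch_approx j ` {0..1}. dist x p \<le> \<rho>"
  using assms
proof (induction j arbitrary: \<rho> x y)
  case 0 then show ?case using koch_approx_0_near koch_subset_triangle by auto
next
  case (Suc j)
  \<comment> \<open>blow up the piece of the curve containing y by the inverse of its Koch map\<close>
  obtain i y' where i: "i < 4" "y' \<in> koch" "y = koch_map i y'"
    using Suc.prems(1) koch_invariant_koch unfolding koch_invariant_def by blast
  obtain x' where x': "x = koch_map i x'" using surj_koch_map[OF i(1)] by (metis surjD)
  have "dist x' y' \<le> 3 * \<rho>" "sqrt 3 / 6 / 3^j \<le> 3 * \<rho>"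
    using Suc.prems dist_koch_map[OF i(1), of x' y'] x' i(3) by (auto simp: field_simps)
  then obtain p' where p': "p' \<in> koch_approx j ` {0..1}" "dist x' p' \<le> 3 * \<rho>"
    using Suc.IH i(2) by blast
  have "koch_map i p' \<in> koch_approx (Suc j) ` {0..1}"
    unfolding image_koch_approx_Suc using i(1) p'(1) by blast
  moreover have "dist x (koch_map i p') \<le> \<rho>" using dist_koch_map[OF i(1), of x' p'] x' p'(2) by simp
  ultimately show ?case by blast
qed

lemma Lam_koch_le:
  assumes "sqrt 3 / 6 / 3^k \<le> r"
  shows "Lam (nbhd koch r) r \<le> ennreal (8 * (4/3)^k)"
proof -
  let ?\<Gamma> = "koch_approx k ` {0..1}"
  have "rect_curve ?\<Gamma>" unfolding rect_curve_def using lipschitz_koch_approx by blast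
  moreover have "nbhd koch r \<subseteq> nbhd ?\<Gamma> r"
    using koch_approx_near[OF _ _ assms] by (auto simp: mem_nbhd_koch mem_nbhd_rect_curve[OF \<open>rect_curve ?\<Gamma>\<close>])
  moreover have "hausdorff1 ?\<Gamma> \<le> ennreal (8 * (4/3)^k)"
    using hausdorff1_lipschitz_image_le[OF lipschitz_koch_approx[of k]] by simp
  ultimately show ?thesis unfolding Lam_def by (intro INF_lower2[of ?\<Gamma>]) auto
qed

section \<open>Lower bound: separated points of the Koch curve\<close>

fun koch_points :: "nat \<Rightarrow> complex set" where
  "koch_points 0 = {koch_inner_point}"
| "koch_points (Suc n) = (\<Union>i<4. koch_map i ` koch_points n)"

lemma koch_points_subset_koch: "koch_points n \<subseteq> koch"
  by (induction n) (use koch_inner_point_in_koch koch_invariant_image_subset[OF koch_invariant_koch] in auto)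

lemma koch_points_balls:
  "(\<forall>q\<in>koch_points n. ball q (1/20/3^n) \<subseteq> koch_triangle_inner) \<and>
   (\<forall>q\<in>koch_points n. \<forall>q'\<in>koch_points n. q \<noteq> q' \<longrightarrow> ball q (1/20/3^n) \<inter> ball q' (1/20/3^n) = {})"
proof (induction n)
  case 0 then show ?case using ball_koch_inner_point_subset by simp
next
  case (Suc n)
  define R :: real where "R = 1/20/3^n"
  have R: "1/20/3^Suc n = R/3" unfolding R_def by simp
  have inner: "ball q R \<subseteq> koch_triangle_inner" if "q \<in> koch_points n" for q
    using Suc.IH that unfolding R_def by blast
  have "ball q (R/3) \<subseteq> koch_triangle_inner" if q: "q \<in> koch_points (Suc n)" for q
  proof -
    obtain i a where ia: "i < 4" "a \<in> koch_points n" "q = koch_map i a"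
      using q unfolding koch_points.simps by blast
    have "ball q (R/3) \<subseteq> koch_map i ` ball a R" using ball_koch_map_subset[OF ia(1)] ia(3) by simp
    also have "\<dots> \<subseteq> koch_triangle_inner"
      using inner[OF ia(2)] koch_map_triangle_inner[OF ia(1)] by blast
    finally show ?thesis .
  qed
  moreover have "ball q (R/3) \<inter> ball q' (R/3) = {}"
    if q: "q \<in> koch_points (Suc n)" "q' \<in> koch_points (Suc n)" "q \<noteq> q'" for q q'
  proof -
    obtain i a where ia: "i < 4" "a \<in> koch_points n" "q = koch_map i a"
      using q(1) unfolding koch_points.simps by blast
    obtain j b where jb: "j < 4" "b \<in> koch_points n" "q' = koch_map j b"
      using q(2) unfolding koch_points.simps by blast
    have "ball a R \<inter> ball b R = {}" if "i = j"
    proof -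
      have "a \<noteq> b" using that ia(3) jb(3) q(3) by blast
      then show ?thesis using Suc.IH ia(2) jb(2) unfolding R_def by blast
    qed
    then have "koch_map i ` ball a R \<inter> koch_map j ` ball b R = {}"
      by (rule koch_map_images_disjoint[OF ia(1) jb(1) inner[OF ia(2)] inner[OF jb(2)]])
    moreover have "ball q (R/3) \<subseteq> koch_map i ` ball a R" "ball q' (R/3) \<subseteq> koch_map j ` ball b R"
      using ball_koch_map_subset[OF ia(1), of a R] ball_koch_map_subset[OF jb(1), of b R] ia(3) jb(3)
      by simp_all
    ultimately show ?thesis by blast
  qed
  ultimately show ?case unfolding R by blast
qed

lemma koch_points_subset_inner: "koch_points n \<subseteq> koch_triangle_inner"
proof
  fix q assume "q \<in> koch_points n"
  then have "q \<in> ball q (1/20/3^n)" "ball q (1/20/3^n) \<subseteq> koch_triangle_inner"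
    using koch_points_balls[of n] by auto
  then show "q \<in> koch_triangle_inner" by blast
qed

lemma finite_koch_points: "finite (koch_points n)"
  by (induction n) auto

lemma card_koch_points: "card (koch_points n) = 4^n"
proof (induction n)
  case (Suc n)
  have disjoint: "koch_map i ` koch_points n \<inter> koch_map j ` koch_points n = {}"
    if "i < 4" "j < 4" "i \<noteq> j" for i j
    using koch_map_images_disjoint[OF that(1,2) koch_points_subset_inner koch_points_subset_inner] that(3)
    by blast
  have card_image: "card (koch_map i ` koch_points n) = 4^n" if "i < 4" for i
    using card_image[OF inj_on_subset[OF inj_koch_map[OF that] subset_UNIV]] Suc.IH by simp
  have "card (koch_points (Suc n)) = (\<Sum>i<4. card (koch_map i ` koch_points n))"
    unfolding koch_points.simps
    by (rule card_UN_disjoint) (simp_all add: finite_koch_points disjoint)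
  also have "\<dots> = (\<Sum>i<(4::nat). 4^n)" by (rule sum.cong) (simp_all add: card_image)
  finally show ?case by simp
qed simp

lemma koch_points_separated:
  assumes "q \<in> koch_points n" "q' \<in> koch_points n" "q \<noteq> q'" shows "1/10/3^n \<le> dist q q'"
  using disjoint_balls_dist_ge[of q "1/20/3^n" q'] koch_points_balls[of n] assms by auto

text \<open>A curve covering the neighbourhood of the Koch curve comes close to the points -\<rho> and 1+\<rho>
  at distance \<rho> from the endpoints 0 and 1, so it has diameter at least 1.\<close>
lemma koch_covering_curve_far_point:
  assumes \<Gamma>: "rect_curve \<Gamma>" "nbhd koch \<rho> \<subseteq> nbhd \<Gamma> \<rho>" and "0 \<le> \<rho>"
  shows "\<exists>p\<in>\<Gamma>. 1/2 \<le> dist y p"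
proof -
  have "complex_of_real (-\<rho>) \<in> nbhd koch \<rho>"
    using zero_in_koch \<open>0 \<le> \<rho>\<close> unfolding mem_nbhd_koch by (intro bexI[of _ 0]) (auto simp: dist_norm)
  then obtain q1 where q1: "q1 \<in> \<Gamma>" "dist (complex_of_real (-\<rho>)) q1 \<le> \<rho>"
    using \<Gamma>(2) mem_nbhd_rect_curve[OF \<Gamma>(1)] by blast
  have "complex_of_real (1+\<rho>) \<in> nbhd koch \<rho>"
    using one_in_koch \<open>0 \<le> \<rho>\<close> unfolding mem_nbhd_koch by (intro bexI[of _ 1]) (auto simp: dist_norm)
  then obtain q2 where q2: "q2 \<in> \<Gamma>" "dist (complex_of_real (1+\<rho>)) q2 \<le> \<rho>"
    using \<Gamma>(2) mem_nbhd_rect_curve[OF \<Gamma>(1)] by blast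
  have "dist (complex_of_real (-\<rho>)) (complex_of_real (1+\<rho>)) = dist (-\<rho>) (1+\<rho>)"
    by (rule dist_of_real)
  also have "\<dots> = 1 + 2*\<rho>" using \<open>0 \<le> \<rho>\<close> by (simp add: dist_real_def)
  finally have "1 \<le> dist q1 q2"
    using q1(2) q2(2) dist_triangle[of "complex_of_real (-\<rho>)" "complex_of_real (1+\<rho>)" q1]
      dist_triangle[of q1 "complex_of_real (1+\<rho>)" q2] by (simp add: dist_commute)
  then have "1/2 \<le> dist y q1 \<or> 1/2 \<le> dist y q2"
    using dist_triangle[of q1 q2 y] by (simp add: dist_commute) linarith
  then show ?thesis using q1(1) q2(1) by blast
qed

lemma Lam_koch_ge_quarter:
  assumes "0 \<le> \<rho>" shows "ennreal (1/4) \<le> Lam (nbhd koch \<rho>) \<rho>"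
  unfolding Lam_def
proof (rule INF_greatest)
  fix \<Gamma> assume \<Gamma>: "\<Gamma> \<in> {\<Gamma>. rect_curve \<Gamma> \<and> nbhd koch \<rho> \<subseteq> nbhd \<Gamma> \<rho>}"
  then obtain y where "y \<in> \<Gamma>" using rect_curve_compact_connected(3) by blast
  have "ennreal (card {y} * ((1/2)/2)) \<le> hausdorff1 \<Gamma>"
    using \<Gamma> \<open>y \<in> \<Gamma>\<close> koch_covering_curve_far_point[OF _ _ assms]
    by (intro hausdorff1_ge_separated_points[where \<delta>=1] rect_curve_compact_connected) auto
  then show "ennreal (1/4) \<le> hausdorff1 \<Gamma>" by simp
qed

lemma hausdorff1_koch_covering_curve_ge:
  assumes \<Gamma>: "rect_curve \<Gamma>" "nbhd koch r \<subseteq> nbhd \<Gamma> r" and r: "0 \<le> r" "3^(n+4) * r < 1"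
  shows "ennreal ((4/3)^n / 80) \<le> hausdorff1 \<Gamma>"
proof -
  define e :: real where "e = 1/3^n"
  have "0 < e" "r < e/81" using r by (auto simp: e_def field_simps power_add)
  have "\<exists>p\<in>\<Gamma>. dist q p \<le> r" if "q \<in> koch_points n" for q
  proof -
    have "q \<in> nbhd \<Gamma> r"
      using that koch_points_subset_koch \<Gamma>(2) r(1) by (force simp: mem_nbhd_koch)
    then show ?thesis using mem_nbhd_rect_curve[OF \<Gamma>(1)] by blast
  qed
  then obtain g where g: "\<And>q. q \<in> koch_points n \<Longrightarrow> g q \<in> \<Gamma> \<and> dist q (g q) \<le> r" by metis
  have far: "2 * (e/40) + e/100 < dist (g q) (g q')"
    if "q \<in> koch_points n" "q' \<in> koch_points n" "q \<noteq> q'" for q q'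
  proof -
    have "e/10 \<le> dist q q'" using koch_points_separated[OF that] by (simp add: e_def)
    also have "\<dots> \<le> dist q (g q) + dist (g q) (g q') + dist q' (g q')"
      using dist_triangle[of q q' "g q"] dist_triangle[of "g q" q' "g q'"] by (simp add: dist_commute)
    finally show ?thesis using g[OF that(1)] g[OF that(2)] \<open>r < e/81\<close> \<open>0 < e\<close> by linarith
  qed
  have "inj_on g (koch_points n)"
  proof (rule inj_onI)
    fix q q' assume "q \<in> koch_points n" "q' \<in> koch_points n" "g q = g q'"
    then show "q = q'" using far[of q q'] \<open>0 < e\<close> by fastforce
  qed
  then have card: "card (g ` koch_points n) = 4^n" by (simp add: card_image card_koch_points)
  have "ennreal (card (g ` koch_points n) * ((e/40)/2)) \<le> hausdorff1 \<Gamma>"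
  proof (rule hausdorff1_ge_separated_points[where \<delta> = "e/100"])
    show "connected \<Gamma>" using rect_curve_compact_connected(2)[OF \<Gamma>(1)] .
    have "e \<le> 1" unfolding e_def by simp
    then show "\<exists>p\<in>\<Gamma>. e/40 \<le> dist y p" for y
      using koch_covering_curve_far_point[OF \<Gamma> r(1), of y] by force
    show "2 * (e/40) + e/100 < dist y y'"
      if "y \<in> g ` koch_points n" "y' \<in> g ` koch_points n" "y \<noteq> y'" for y y'
      using that far by blast
  qed (use g finite_koch_points \<open>0 < e\<close> in auto)
  moreover have "card (g ` koch_points n) * ((e/40)/2) = (4/3)^n / 80"
    unfolding card e_def by (simp add: power_divide)
  ultimately show ?thesis by simp
qed

lemma Lam_koch_ge:
  assumes "0 < r" "3^k * r < 1" shows "ennreal (81/20480 * (4/3)^k) \<le> Lam (nbhd koch r) r"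
proof (cases "k < 4")
  case True
  have "(4/3::real)^k \<le> (4/3)^3" using True by (intro power_increasing) auto
  also have "\<dots> = 64/27" by (simp add: power_divide)
  finally have "81/20480 * (4/3::real)^k \<le> 1/4" by linarith
  then have "ennreal (81/20480 * (4/3)^k) \<le> ennreal (1/4)" by (rule ennreal_leI)
  also have "\<dots> \<le> Lam (nbhd koch r) r" using Lam_koch_ge_quarter assms(1) by simp
  finally show ?thesis .
next
  case False
  then obtain n where k: "k = n + 4" by (metis add.commute le_Suc_ex not_less)
  have "81/20480 * (4/3::real)^k = (4/3)^n / 80" by (simp add: k power_add power_divide)
  then show ?thesis
    unfolding Lam_def using hausdorff1_koch_covering_curve_ge assms k by (intro INF_greatest) auto
qed

theorem lemma3p5:
  shows "\<exists>C::real. C > 1 \<and> (\<forall>r::real. 0 < r \<and> r < 1/3 \<longrightarrow>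
           (\<forall>k::nat. 0 < k \<and> 1/3 \<le> 3^k * r \<and> 3^k * r < 1 \<longrightarrow>
              ennreal (1/C) * Lam (nbhd koch (3^k * r)) (3^k * r) * ennreal ((4/3)^k)
                \<le> Lam (nbhd koch r) r
            \<and> Lam (nbhd koch r) r
                \<le> ennreal C * Lam (nbhd koch (3^k * r)) (3^k * r) * ennreal ((4/3)^k)))"
proof (rule exI[of _ 3000], rule conjI, simp, intro allI impI)
  fix r :: real and k :: nat
  assume r: "0 < r \<and> r < 1/3" and k: "0 < k \<and> 1/3 \<le> 3^k * r \<and> 3^k * r < 1"
  have "sqrt 3 / 6 \<le> 1/3" using sqrt3_bounds by simp
  then have "sqrt 3 / 6 / 3^k \<le> r" "sqrt 3 / 6 / 3^0 \<le> 3^k * r"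
    using k by (auto simp: field_simps)
  then show "ennreal (1/3000) * Lam (nbhd koch (3^k * r)) (3^k * r) * ennreal ((4/3)^k)
                \<le> Lam (nbhd koch r) r
            \<and> Lam (nbhd koch r) r
                \<le> ennreal 3000 * Lam (nbhd koch (3^k * r)) (3^k * r) * ennreal ((4/3)^k)"
    using Lam_koch_ge_quarter[of "3^k * r"] Lam_koch_le[of 0 "3^k * r"] Lam_koch_ge[of r k]
      Lam_koch_le[of k r] r k
    by (intro ennreal_two_sided_comparison[where a = "1/4" and b = 8 and c = "81/20480" and d = 8]) auto
qed

end
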